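(* Let $G$ be a simple graph with $m$ edges and girth $g(G)>3$. Then $$\gamma(G)=2EM_2(G)-\beta(G)+4EM_1(G)-2F(G)+6M_1(G)-8m.$$
   Context: All graphs are finite, simple and undirected; $d_G(v)$ is the degree of $v$. $M_1(G)=\sum_v d_G(v)^2$, $F(G)=\sum_v d_G(v)^3$. For an edge $e=uv$, $d_G(e)=d_G(u)+d_G(v)-2$. Write $e\sim f$ for two distinct edges sharing a vertex and $e\cap f$ for that vertex; sums over $e\sim f$ are over unordered pairs. $EM_1(G)=\sum_{e\in E(G)}d_G(e)^2$, $EM_2(G)=\sum_{e\sim f}d_G(e)d_G(f)$, $\beta(G)=\sum_{e\sim f}d_G(e\cap f)(d_G(e)+d_G(f))$. A vertex $v$ is incident to an edge $e=xy$ ($v\ne x,y$) if $\{vx,vy\}\cap E(G)\ne\emptyset$; $\Lambda(G)$ is the set of pairs $\{v,e\}$ with $v$ incident to $e$ in this sense; $\gamma(G)=\sum_{\{v,xy\}\in\Lambda(G)}d_G(v)[d_G(x)+d_G(y)]$. *)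

theory Defs
  imports Main "HOL-Library.Extended_Nat"
begin

definition simple_graph :: "'a set \<Rightarrow> 'a set set \<Rightarrow> bool" where
  "simple_graph V E \<longleftrightarrow> finite V \<and> (\<forall>e\<in>E. e \<subseteq> V \<and> card e = 2)"

definition deg :: "'a set set \<Rightarrow> 'a \<Rightarrow> int" where
  "deg E v = int (card {e\<in>E. v \<in> e})"

definition edeg :: "'a set set \<Rightarrow> 'a set \<Rightarrow> int" where
  "edeg E e = (\<Sum>x\<in>e. deg E x) - 2"

text \<open>Cycles as lists of at least 3 distinct vertices, cyclically consecutive ones adjacent;
  girth = minimum cycle length (infinity if acyclic).\<close>
definition is_cycle :: "'a set set \<Rightarrow> 'a list \<Rightarrow> bool" where
  "is_cycle E cs \<longleftrightarrow> length cs \<ge> 3 \<and> distinct cs \<and>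
     (\<forall>i<length cs. {cs ! i, cs ! ((i + 1) mod length cs)} \<in> E)"

definition girth :: "'a set set \<Rightarrow> enat" where
  "girth E = (INF cs \<in> {cs. is_cycle E cs}. enat (length cs))"

definition M1 :: "'a set \<Rightarrow> 'a set set \<Rightarrow> int" where
  "M1 V E = (\<Sum>v\<in>V. deg E v ^ 2)"

definition Fidx :: "'a set \<Rightarrow> 'a set set \<Rightarrow> int" where
  "Fidx V E = (\<Sum>v\<in>V. deg E v ^ 3)"

definition EM1 :: "'a set set \<Rightarrow> int" where
  "EM1 E = (\<Sum>e\<in>E. edeg E e ^ 2)"

definition adj_edge_pairs :: "'a set set \<Rightarrow> 'a set set set" where
  "adj_edge_pairs E = {{e, f} | e f. e \<in> E \<and> f \<in> E \<and> e \<noteq> f \<and> e \<inter> f \<noteq> {}}"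

definition EM2 :: "'a set set \<Rightarrow> int" where
  "EM2 E = (\<Sum>p\<in>adj_edge_pairs E. \<Prod>e\<in>p. edeg E e)"

text \<open>beta: sum over e ~ f of d(e \<inter> f) (d(e) + d(f)); \<Inter>{e,f} = e \<inter> f is the common vertex.\<close>
definition beta :: "'a set set \<Rightarrow> int" where
  "beta E = (\<Sum>p\<in>adj_edge_pairs E. deg E (the_elem (\<Inter>p)) * (\<Sum>e\<in>p. edeg E e))"

definition Lambda :: "'a set \<Rightarrow> 'a set set \<Rightarrow> ('a \<times> 'a set) set" where
  "Lambda V E = {(v, e). v \<in> V \<and> e \<in> E \<and> v \<notin> e \<and> (\<exists>x\<in>e. {v, x} \<in> E)}"

definition gamma :: "'a set \<Rightarrow> 'a set set \<Rightarrow> int" where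
  "gamma V E = (\<Sum>(v, e)\<in>Lambda V E. deg E v * (\<Sum>x\<in>e. deg E x))"

end

theory Submission
  imports Defs
begin

(* A path of length two is an ordered triple (a, c, b) with edges ac and cb and a <> b.
  Each pair of adjacent edges comes from exactly the two paths (a, c, b) and (b, c, a), and in a
  triangle-free graph each pair (v, xy) of Lambda comes from exactly one path, (v, x, y) with vx
  an edge. So gamma, 2 EM_2 and 2 beta are sums over these paths. So is EM_1: summing d(cb) over
  the paths counts the edge cb with weight d(c) - 1 in one orientation and d(b) - 1 in the other,
  and these add up to d(cb). Summing the pointwise identity
  d(a) (d(c) + d(b)) = (d(ac) + 2 - d(c)) (d(cb) + 2) over all paths gives the formula, the terms
  in d(c) alone producing F, M_1 and m. *)

lemma sum_comp_two_to_one: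
  fixes g :: "'b \<Rightarrow> 'c::comm_semiring_1"
  assumes "finite A"
    and \<sigma>: "\<And>x. x \<in> A \<Longrightarrow> \<sigma> x \<in> A \<and> \<sigma> x \<noteq> x \<and> f (\<sigma> x) = f x"
    and fibre: "\<And>x y. x \<in> A \<Longrightarrow> y \<in> A \<Longrightarrow> f y = f x \<Longrightarrow> y = x \<or> y = \<sigma> x"
  shows "(\<Sum>x\<in>A. g (f x)) = 2 * (\<Sum>y\<in>f ` A. g y)"
proof -
  have "(\<Sum>x\<in>A. g (f x)) = (\<Sum>y\<in>f ` A. \<Sum>x\<in>{x\<in>A. f x = y}. g (f x))"
    using sum.image_gen[OF \<open>finite A\<close>] by blast
  also have "\<dots> = (\<Sum>y\<in>f ` A. 2 * g y)"
  proof (rule sum.cong[OF refl])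
    fix y assume "y \<in> f ` A"
    then obtain x where x: "x \<in> A" "y = f x" by auto
    then have "{x'\<in>A. f x' = y} = {x, \<sigma> x}"
      using \<sigma>[OF x(1)] fibre[OF x(1)] by auto
    moreover have "x \<notin> {\<sigma> x}" using \<sigma>[OF x(1)] by auto
    ultimately show "(\<Sum>x\<in>{x\<in>A. f x = y}. g (f x)) = 2 * g y"
      using x \<sigma>[OF x(1)] by (simp add: mult_2)
  qed
  finally show ?thesis by (simp add: sum_distrib_left)
qed

lemma edeg_doubleton: "a \<noteq> b \<Longrightarrow> edeg E {a, b} = deg E a + deg E b - 2"
  by (simp add: edeg_def)

locale sgraph =
  fixes V :: "'a set" and E :: "'a set set"
  assumes simple_graph: "simple_graph V E"
begin

lemma finite_V: "finite V"
  using simple_graph by (simp add: simple_graph_def)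

lemma edge_doubleton:
  assumes "e \<in> E" shows "\<exists>a b. a \<noteq> b \<and> e = {a, b}"
proof -
  have "card e = 2" using simple_graph assms by (simp add: simple_graph_def)
  then show ?thesis by (auto simp: card_2_iff)
qed

lemma adj_distinct: "{a, b} \<in> E \<Longrightarrow> a \<noteq> b"
  using edge_doubleton by fastforce

lemma adj_in_V: "{a, b} \<in> E \<Longrightarrow> a \<in> V \<and> b \<in> V"
  using simple_graph by (auto simp: simple_graph_def)

lemma edge_through: "e \<in> E \<Longrightarrow> z \<in> e \<Longrightarrow> \<exists>a. a \<noteq> z \<and> e = {a, z}"
  using edge_doubleton by fastforce

lemma triangle_is_cycle:
  assumes "{a, b} \<in> E" "{b, c} \<in> E" "{a, c} \<in> E"
  shows "is_cycle E [a, b, c]"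
  unfolding is_cycle_def
proof (intro conjI allI impI)
  show "distinct [a, b, c]" using assms adj_distinct by auto
  fix i assume "i < length [a, b, c]"
  then have "i = 0 \<or> i = 1 \<or> i = 2" by auto
  then show "{[a, b, c] ! i, [a, b, c] ! ((i + 1) mod length [a, b, c])} \<in> E"
    using assms by (auto simp: insert_commute)
qed simp

lemma triangle_free_if_girth_gt_3:
  assumes "girth E > 3" "{a, b} \<in> E" "{b, c} \<in> E" "{a, c} \<in> E"
  shows False
proof -
  have "girth E \<le> enat (length [a, b, c])"
    unfolding girth_def using triangle_is_cycle[OF assms(2-4)] by (rule INF_lower[OF CollectI])
  then show False
    using assms(1) by (simp add: numeral_3_eq_3 numeral_eq_enat)
qed

definition neighbours :: "'a \<Rightarrow> 'a set" where
  "neighbours a = {b. {a, b} \<in> E}"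

lemma neighbours_subset_V: "neighbours a \<subseteq> V"
  using adj_in_V by (auto simp: neighbours_def)

lemma finite_neighbours: "finite (neighbours a)"
  using finite_subset[OF neighbours_subset_V finite_V] .

lemma card_neighbours: "int (card (neighbours a)) = deg E a"
proof -
  have "{e\<in>E. a \<in> e} = (\<lambda>b. {a, b}) ` neighbours a"
  proof
    show "{e\<in>E. a \<in> e} \<subseteq> (\<lambda>b. {a, b}) ` neighbours a"
    proof clarify
      fix e assume "e \<in> E" "a \<in> e"
      then obtain b where "e = {a, b}" using edge_through by (metis insert_commute)
      with \<open>e \<in> E\<close> show "e \<in> (\<lambda>b. {a, b}) ` neighbours a"
        by (simp add: neighbours_def)
    qed
  qed (auto simp: neighbours_def)
  moreover have "inj_on (\<lambda>b. {a, b}) (neighbours a)"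
    by (auto simp: inj_on_def doubleton_eq_iff)
  ultimately show ?thesis
    by (simp add: deg_def card_image)
qed

definition arcs :: "('a \<times> 'a) set" where
  "arcs = {(a, b). {a, b} \<in> E}"

lemma arcs_eq_Sigma: "arcs = Sigma V neighbours"
  unfolding arcs_def neighbours_def using adj_in_V by blast

lemma finite_arcs: "finite arcs"
  by (simp add: arcs_eq_Sigma finite_V finite_neighbours)

lemma sum_arcs_swap: "(\<Sum>(a, b)\<in>arcs. h a b) = (\<Sum>(a, b)\<in>arcs. h b a)"
  by (rule sum.reindex_bij_witness[where i = prod.swap and j = prod.swap])
     (auto simp: arcs_def insert_commute)

lemma sum_arcs_tail: "(\<Sum>(a, b)\<in>arcs. h a) = (\<Sum>v\<in>V. deg E v * h v)"
proof -
  have "(\<Sum>(a, b)\<in>arcs. h a) = (\<Sum>a\<in>V. \<Sum>b\<in>neighbours a. h a)"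
    unfolding arcs_eq_Sigma by (rule sum.Sigma[symmetric]) (simp_all add: finite_V finite_neighbours)
  then show ?thesis
    by (simp add: card_neighbours)
qed

lemma sum_arcs_edges:
  fixes f :: "'a set \<Rightarrow> 'b::comm_semiring_1"
  shows "(\<Sum>(a, b)\<in>arcs. f {a, b}) = 2 * (\<Sum>e\<in>E. f e)"
proof -
  have "(\<lambda>(a, b). {a, b}) ` arcs = E"
  proof
    show "E \<subseteq> (\<lambda>(a, b). {a, b}) ` arcs"
    proof
      fix e assume "e \<in> E"
      then obtain a b where e: "e = {a, b}" using edge_doubleton by blast
      with \<open>e \<in> E\<close> have "(a, b) \<in> arcs" by (simp add: arcs_def)
      then show "e \<in> (\<lambda>(a, b). {a, b}) ` arcs"
        unfolding e by (rule rev_image_eqI) simp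
    qed
  qed (auto simp: arcs_def)
  moreover have "(\<Sum>x\<in>arcs. f ((\<lambda>(a, b). {a, b}) x)) = 2 * (\<Sum>e\<in>(\<lambda>(a, b). {a, b}) ` arcs. f e)"
  proof (rule sum_comp_two_to_one[OF finite_arcs, where \<sigma> = prod.swap])
    fix x assume "x \<in> arcs"
    then obtain a b where x: "x = (a, b)" "{a, b} \<in> E" by (auto simp: arcs_def)
    moreover have "a \<noteq> b" using adj_distinct[OF x(2)] .
    ultimately show "prod.swap x \<in> arcs \<and> prod.swap x \<noteq> x \<and>
        (\<lambda>(a, b). {a, b}) (prod.swap x) = (\<lambda>(a, b). {a, b}) x"
      by (simp add: arcs_def insert_commute)
  next
    fix x y :: "'a \<times> 'a"
    assume "(\<lambda>(a, b). {a, b}) y = (\<lambda>(a, b). {a, b}) x"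
    then show "y = x \<or> y = prod.swap x"
      by (cases x; cases y) (auto simp: doubleton_eq_iff)
  qed
  ultimately show ?thesis
    by (simp add: split_def)
qed

lemma sum_deg: "(\<Sum>v\<in>V. deg E v) = 2 * int (card E)"
  using sum_arcs_tail[of "\<lambda>_. 1::int"] sum_arcs_edges[of "\<lambda>_. 1::int"] by simp

definition paths2 :: "('a \<times> 'a \<times> 'a) set" where
  "paths2 = {(a, c, b). {a, c} \<in> E \<and> {c, b} \<in> E \<and> a \<noteq> b}"

lemma paths2_eq_image_Sigma:
  "paths2 = (\<lambda>((c, b), a). (a, c, b)) ` Sigma arcs (\<lambda>(c, b). neighbours c - {b})"
  by (auto simp: paths2_def arcs_def neighbours_def image_iff insert_commute)

lemma finite_paths2: "finite paths2"
  by (simp add: paths2_eq_image_Sigma finite_arcs finite_neighbours split_def)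

lemma sum_paths2_rev: "(\<Sum>(a, c, b)\<in>paths2. h a c b) = (\<Sum>(a, c, b)\<in>paths2. h b c a)"
  by (rule sum.reindex_bij_witness[where i = "\<lambda>(a, c, b). (b, c, a)" and j = "\<lambda>(a, c, b). (b, c, a)"])
     (auto simp: paths2_def insert_commute)

lemma sum_paths2_last_edge:
  "(\<Sum>(a, c, b)\<in>paths2. g c b) = (\<Sum>(c, b)\<in>arcs. (deg E c - 1) * g c b)"
proof -
  have "(\<Sum>(a, c, b)\<in>paths2. g c b) = (\<Sum>((c, b), a)\<in>Sigma arcs (\<lambda>(c, b). neighbours c - {b}). g c b)"
    unfolding paths2_eq_image_Sigma
    by (subst sum.reindex) (auto simp: inj_on_def split_def)
  also have "\<dots> = (\<Sum>(c, b)\<in>arcs. \<Sum>a\<in>neighbours c - {b}. g c b)"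
    using sum.Sigma[of arcs "\<lambda>(c, b). neighbours c - {b}" "\<lambda>(c, b) a. g c b"]
    by (simp add: finite_arcs finite_neighbours split_def)
  also have "\<dots> = (\<Sum>(c, b)\<in>arcs. (deg E c - 1) * g c b)"
  proof (rule sum.cong[OF refl], clarify)
    fix c b assume "(c, b) \<in> arcs"
    then have "b \<in> neighbours c" by (simp add: arcs_def neighbours_def)
    then have "card (neighbours c) \<ge> 1"
      using finite_neighbours by (metis One_nat_def card_gt_0_iff empty_iff Suc_leI)
    with \<open>b \<in> neighbours c\<close> have "int (card (neighbours c - {b})) = deg E c - 1"
      by (simp add: card_neighbours[symmetric] of_nat_diff)
    then show "(\<Sum>a\<in>neighbours c - {b}. g c b) = (deg E c - 1) * g c b"
      by simp
  qed
  finally show ?thesis .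
qed

lemma path2_edges_inter:
  assumes "(a, c, b) \<in> paths2"
  shows "{a, c} \<inter> {c, b} = {c}"
  using assms adj_distinct by (auto simp: paths2_def)

lemma path2_edges_distinct: "(a, c, b) \<in> paths2 \<Longrightarrow> {a, c} \<noteq> {c, b}"
  unfolding paths2_def using adj_distinct by (auto simp: doubleton_eq_iff)

lemma paths2_same_edges:
  assumes "(a, c, b) \<in> paths2" "(a', c', b') \<in> paths2"
    and same: "{{a, c}, {c, b}} = {{a', c'}, {c', b'}}"
  shows "(a', c', b') = (a, c, b) \<or> (a', c', b') = (b, c, a)"
proof -
  have "{c} = {c'}"
    using same path2_edges_inter[OF assms(1)] path2_edges_inter[OF assms(2)]
    by (auto simp: doubleton_eq_iff Int_commute)
  then have "c' = c" by simp
  with same assms show ?thesis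
    by (auto simp: doubleton_eq_iff paths2_def)
qed

lemma adj_edge_pairs_eq_image_paths2:
  "adj_edge_pairs E = (\<lambda>(a, c, b). {{a, c}, {c, b}}) ` paths2"
proof
  show "(\<lambda>(a, c, b). {{a, c}, {c, b}}) ` paths2 \<subseteq> adj_edge_pairs E"
    using path2_edges_distinct by (fastforce simp: adj_edge_pairs_def paths2_def)
  show "adj_edge_pairs E \<subseteq> (\<lambda>(a, c, b). {{a, c}, {c, b}}) ` paths2"
  proof
    fix p assume "p \<in> adj_edge_pairs E"
    then obtain e f c where ef: "e \<in> E" "f \<in> E" "e \<noteq> f" "c \<in> e" "c \<in> f" "p = {e, f}"
      unfolding adj_edge_pairs_def by blast
    obtain a where a: "e = {a, c}" using edge_through[OF ef(1,4)] by blast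
    obtain b where b: "f = {c, b}" using edge_through[OF ef(2,5)] by (metis insert_commute)
    have "(a, c, b) \<in> paths2" using ef a b by (auto simp: paths2_def)
    then show "p \<in> (\<lambda>(a, c, b). {{a, c}, {c, b}}) ` paths2"
      unfolding ef(6) a b by (rule rev_image_eqI) simp
  qed
qed

lemma sum_adj_edge_pairs:
  fixes h :: "'a set set \<Rightarrow> 'b::comm_semiring_1"
  shows "(\<Sum>(a, c, b)\<in>paths2. h {{a, c}, {c, b}}) = 2 * (\<Sum>p\<in>adj_edge_pairs E. h p)"
proof -
  have "(\<Sum>x\<in>paths2. h ((\<lambda>(a, c, b). {{a, c}, {c, b}}) x))
      = 2 * (\<Sum>p\<in>(\<lambda>(a, c, b). {{a, c}, {c, b}}) ` paths2. h p)"
  proof (rule sum_comp_two_to_one[OF finite_paths2, where \<sigma> = "\<lambda>(a, c, b). (b, c, a)"])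
    fix x assume "x \<in> paths2"
    then obtain a c b where "x = (a, c, b)" "{a, c} \<in> E" "{c, b} \<in> E" "a \<noteq> b"
      by (auto simp: paths2_def)
    then show "(\<lambda>(a, c, b). (b, c, a)) x \<in> paths2 \<and> (\<lambda>(a, c, b). (b, c, a)) x \<noteq> x \<and>
        (\<lambda>(a, c, b). {{a, c}, {c, b}}) ((\<lambda>(a, c, b). (b, c, a)) x) = (\<lambda>(a, c, b). {{a, c}, {c, b}}) x"
      by (simp add: paths2_def insert_commute)
  next
    fix x y assume "x \<in> paths2" "y \<in> paths2"
      and "(\<lambda>(a, c, b). {{a, c}, {c, b}}) y = (\<lambda>(a, c, b). {{a, c}, {c, b}}) x"
    then show "y = x \<or> y = (\<lambda>(a, c, b). (b, c, a)) x"
      using paths2_same_edges by (cases x; cases y) auto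
  qed
  then show ?thesis
    by (simp add: adj_edge_pairs_eq_image_paths2 split_def)
qed

lemma EM2_eq_sum_paths2: "2 * EM2 E = (\<Sum>(a, c, b)\<in>paths2. edeg E {a, c} * edeg E {c, b})"
  unfolding EM2_def sum_adj_edge_pairs[symmetric]
  by (rule sum.cong[OF refl]) (auto simp: path2_edges_distinct)

lemma beta_eq_sum_paths2: "beta E = (\<Sum>(a, c, b)\<in>paths2. deg E c * edeg E {c, b})"
proof -
  have "2 * beta E = (\<Sum>(a, c, b)\<in>paths2. deg E c * edeg E {a, c} + deg E c * edeg E {c, b})"
    unfolding beta_def sum_adj_edge_pairs[symmetric]
  proof (rule sum.cong[OF refl], clarify)
    fix a c b assume p: "(a, c, b) \<in> paths2"
    have centre: "the_elem (\<Inter>{{a, c}, {c, b}}) = c"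
      by (simp only: Inter_insert Inter_empty Int_UNIV_right path2_edges_inter[OF p] the_elem_eq)
    from p show "deg E (the_elem (\<Inter>{{a, c}, {c, b}})) * (\<Sum>e\<in>{{a, c}, {c, b}}. edeg E e)
        = deg E c * edeg E {a, c} + deg E c * edeg E {c, b}"
      unfolding centre by (simp add: path2_edges_distinct algebra_simps)
  qed
  also have "\<dots> = (\<Sum>(a, c, b)\<in>paths2. deg E c * edeg E {a, c})
      + (\<Sum>(a, c, b)\<in>paths2. deg E c * edeg E {c, b})"
    by (simp add: split_def sum.distrib)
  also have "(\<Sum>(a, c, b)\<in>paths2. deg E c * edeg E {a, c})
      = (\<Sum>(a, c, b)\<in>paths2. deg E c * edeg E {c, b})"
    using sum_paths2_rev[of "\<lambda>a c b. deg E c * edeg E {a, c}"] by (simp add: insert_commute)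
  finally show ?thesis by simp
qed

lemma EM1_eq_sum_paths2: "EM1 E = (\<Sum>(a, c, b)\<in>paths2. edeg E {c, b})"
proof -
  have "2 * EM1 E = (\<Sum>(c, b)\<in>arcs. edeg E {c, b} ^ 2)"
    by (simp add: EM1_def sum_arcs_edges[of "\<lambda>e. edeg E e ^ 2"])
  also have "\<dots> = (\<Sum>(c, b)\<in>arcs. (deg E c - 1) * edeg E {c, b} + (deg E b - 1) * edeg E {c, b})"
    by (rule sum.cong[OF refl])
       (auto simp: arcs_def edeg_doubleton adj_distinct power2_eq_square algebra_simps)
  also have "\<dots> = (\<Sum>(c, b)\<in>arcs. (deg E c - 1) * edeg E {c, b})
      + (\<Sum>(c, b)\<in>arcs. (deg E b - 1) * edeg E {c, b})"
    by (simp add: split_def sum.distrib)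
  also have "(\<Sum>(c, b)\<in>arcs. (deg E b - 1) * edeg E {c, b})
      = (\<Sum>(c, b)\<in>arcs. (deg E c - 1) * edeg E {c, b})"
    using sum_arcs_swap[of "\<lambda>c b. (deg E b - 1) * edeg E {c, b}"] by (simp add: insert_commute)
  finally show ?thesis
    by (simp add: sum_paths2_last_edge)
qed

lemma sum_paths2_centre_deg:
  "(\<Sum>(a, c, b)\<in>paths2. 4 - 2 * deg E c) = - 2 * Fidx V E + 6 * M1 V E - 8 * int (card E)"
proof -
  have "(\<Sum>(a, c, b)\<in>paths2. 4 - 2 * deg E c) = (\<Sum>v\<in>V. deg E v * ((deg E v - 1) * (4 - 2 * deg E v)))"
    using sum_paths2_last_edge[of "\<lambda>c b. 4 - 2 * deg E c"]
      sum_arcs_tail[of "\<lambda>c. (deg E c - 1) * (4 - 2 * deg E c)"]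
    by simp
  also have "\<dots> = (\<Sum>v\<in>V. - 2 * deg E v ^ 3 + 6 * deg E v ^ 2 - 4 * deg E v)"
    by (rule sum.cong[OF refl]) (simp add: algebra_simps power3_eq_cube power2_eq_square)
  also have "\<dots> = - 2 * Fidx V E + 6 * M1 V E - 4 * (\<Sum>v\<in>V. deg E v)"
    by (simp add: Fidx_def M1_def sum.distrib sum_subtractf sum_distrib_left sum_negf)
  finally show ?thesis
    by (simp add: sum_deg)
qed

lemma Lambda_eq_image_paths2: "Lambda V E = (\<lambda>(a, c, b). (a, {c, b})) ` paths2"
proof
  show "(\<lambda>(a, c, b). (a, {c, b})) ` paths2 \<subseteq> Lambda V E"
    using adj_distinct adj_in_V by (fastforce simp: paths2_def Lambda_def)
  show "Lambda V E \<subseteq> (\<lambda>(a, c, b). (a, {c, b})) ` paths2"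
  proof clarify
    fix v e assume "(v, e) \<in> Lambda V E"
    then obtain x where "e \<in> E" "v \<notin> e" "x \<in> e" "{v, x} \<in> E"
      unfolding Lambda_def by blast
    moreover obtain y where "e = {y, x}" using edge_through[OF \<open>e \<in> E\<close> \<open>x \<in> e\<close>] by blast
    ultimately have "(v, x, y) \<in> paths2" "e = {x, y}"
      by (auto simp: paths2_def insert_commute)
    then show "(v, e) \<in> (\<lambda>(a, c, b). (a, {c, b})) ` paths2"
      by (auto intro: rev_image_eqI)
  qed
qed

end

locale triangle_free_graph = sgraph +
  assumes triangle_free: "{a, b} \<in> E \<Longrightarrow> {b, c} \<in> E \<Longrightarrow> {a, c} \<in> E \<Longrightarrow> False"
begin

lemma inj_on_paths2_Lambda: "inj_on (\<lambda>(a, c, b). (a, {c, b})) paths2"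
proof (rule inj_onI)
  fix x y assume "x \<in> paths2" "y \<in> paths2"
    and "(\<lambda>(a, c, b). (a, {c, b})) x = (\<lambda>(a, c, b). (a, {c, b})) y"
  then obtain a c b c' b' where "x = (a, c, b)" "y = (a, c', b')" "{c, b} = {c', b'}"
    "(a, c, b) \<in> paths2" "(a, c', b') \<in> paths2"
    by (cases x; cases y) auto
  then show "x = y"
    using triangle_free[of a c b] by (auto simp: paths2_def doubleton_eq_iff insert_commute)
qed

lemma gamma_eq_sum_paths2: "gamma V E = (\<Sum>(a, c, b)\<in>paths2. deg E a * (deg E c + deg E b))"
proof -
  have "gamma V E = (\<Sum>(a, c, b)\<in>paths2. deg E a * (\<Sum>x\<in>{c, b}. deg E x))"
    unfolding gamma_def Lambda_eq_image_paths2 sum.reindex[OF inj_on_paths2_Lambda]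
    by (simp add: comp_def split_def)
  also have "\<dots> = (\<Sum>(a, c, b)\<in>paths2. deg E a * (deg E c + deg E b))"
    by (rule sum.cong[OF refl]) (auto simp: paths2_def adj_distinct)
  finally show ?thesis .
qed

theorem gamma_formula:
  "gamma V E = 2 * EM2 E - beta E + 4 * EM1 E - 2 * Fidx V E + 6 * M1 V E - 8 * int (card E)"
proof -
  have first_edge: "(\<Sum>(a, c, b)\<in>paths2. edeg E {a, c}) = EM1 E"
    using sum_paths2_rev[of "\<lambda>a c b. edeg E {a, c}"] EM1_eq_sum_paths2 by (simp add: insert_commute)
  have "gamma V E = (\<Sum>(a, c, b)\<in>paths2. edeg E {a, c} * edeg E {c, b} + 2 * edeg E {a, c}
      + 2 * edeg E {c, b} - deg E c * edeg E {c, b} + (4 - 2 * deg E c))"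
    unfolding gamma_eq_sum_paths2
    by (rule sum.cong[OF refl]) (auto simp: paths2_def edeg_doubleton adj_distinct algebra_simps)
  also have "\<dots> = (\<Sum>(a, c, b)\<in>paths2. edeg E {a, c} * edeg E {c, b})
      + 2 * (\<Sum>(a, c, b)\<in>paths2. edeg E {a, c}) + 2 * (\<Sum>(a, c, b)\<in>paths2. edeg E {c, b})
      - (\<Sum>(a, c, b)\<in>paths2. deg E c * edeg E {c, b}) + (\<Sum>(a, c, b)\<in>paths2. 4 - 2 * deg E c)"
    by (simp add: split_def sum.distrib sum_subtractf sum_distrib_left)
  finally show ?thesis
    by (simp add: first_edge EM2_eq_sum_paths2[symmetric] beta_eq_sum_paths2[symmetric]
        EM1_eq_sum_paths2[symmetric] sum_paths2_centre_deg)
qed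

end

theorem lemma2p6:
  fixes V :: "'a set" and E :: "'a set set"
  assumes "simple_graph V E"
    and "girth E > 3"
  shows "gamma V E = 2 * EM2 E - beta E + 4 * EM1 E - 2 * Fidx V E + 6 * M1 V E - 8 * int (card E)"
proof -
  interpret sgraph V E by (rule sgraph.intro) fact
  interpret triangle_free_graph V E
    by unfold_locales (use assms(2) triangle_free_if_girth_gt_3 in blast)
  show ?thesis by (rule gamma_formula)
qed

end
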